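(* Let $D$ be a strong nonseparable digraph, let $H$ be a strong nonseparable subdigraph of $D$, and let $P=(x_0,x_1,\ldots,x_{r-1},x_r)$ be an ear of $H$ in $D$ with length $l(P)=r\geq 2$. If $H$ has no kernel and $H'=H\cup P$ has a kernel $N'$, then one of the following holds: (1) $x_0\notin N'$, $x_r\in N'$ and $l(P)$ is odd; (2) $x_0,x_r\notin N'$ and $l(P)$ is even.
   Context: All digraphs are finite, without loops or multiple arcs. Paths and cycles are directed; the length of a path is its number of arcs. A digraph is strong if for every ordered pair of vertices $x,y$ there is a directed path from $x$ to $y$; it is nonseparable if its underlying undirected graph is nonseparable (has no cut vertex). For a subdigraph $H$ of $D$, an ear of $H$ in $D$ is a directed path $(x_0,\ldots,x_r)$ in $D$ whose end vertices $x_0,x_r$ lie in $H$ and whose internal vertices $x_1,\ldots,x_{r-1}$ do not lie in $H$ (or a directed cycle with exactly one vertex $x_0=x_r$ in $H$). A kernel of a digraph is a set $N$ of vertices that is independent (no arc between two of its vertices) and absorbent (every vertex not in $N$ has an out-neighbour in $N$). *)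

theory Defs
  imports Main
begin

text \<open>A digraph is given by a vertex set V and an arc relation A: finite, loopless,
  arcs between vertices (multiple arcs are impossible in a relation).\<close>
definition digraph :: "'a set \<Rightarrow> ('a \<times> 'a) set \<Rightarrow> bool" where
  "digraph V A \<longleftrightarrow> finite V \<and> A \<subseteq> V \<times> V \<and> (\<forall>x. (x, x) \<notin> A)"

definition subdigraph :: "'a set \<Rightarrow> ('a \<times> 'a) set \<Rightarrow> 'a set \<Rightarrow> ('a \<times> 'a) set \<Rightarrow> bool" where
  "subdigraph VH AH V A \<longleftrightarrow> digraph VH AH \<and> VH \<subseteq> V \<and> AH \<subseteq> A"

definition strong :: "'a set \<Rightarrow> ('a \<times> 'a) set \<Rightarrow> bool" where
  "strong V A \<longleftrightarrow> (\<forall>x\<in>V. \<forall>y\<in>V. (x, y) \<in> A\<^sup>*)"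

definition und_connected_on :: "'a set \<Rightarrow> ('a \<times> 'a) set \<Rightarrow> bool" where
  "und_connected_on S A \<longleftrightarrow>
     (\<forall>x\<in>S. \<forall>y\<in>S. (x, y) \<in> ((A \<union> A\<inverse>) \<inter> (S \<times> S))\<^sup>*)"

definition nonseparable :: "'a set \<Rightarrow> ('a \<times> 'a) set \<Rightarrow> bool" where
  "nonseparable V A \<longleftrightarrow> und_connected_on V A \<and> (\<forall>v\<in>V. und_connected_on (V - {v}) A)"

text \<open>Ear of H = (VH, AH) in D = (V, A), given as the vertex list [x_0, ..., x_r]:
  a directed path of D (or a directed cycle through exactly one vertex of H).\<close>
definition is_ear :: "'a set \<Rightarrow> ('a \<times> 'a) set \<Rightarrow> 'a set \<Rightarrow> 'a list \<Rightarrow> bool" where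
  "is_ear V A VH xs \<longleftrightarrow>
     length xs \<ge> 2 \<and>
     (\<forall>i. i + 1 < length xs \<longrightarrow> (xs ! i, xs ! (i + 1)) \<in> A) \<and>
     hd xs \<in> VH \<and> last xs \<in> VH \<and>
     (\<forall>i. 0 < i \<and> i + 1 < length xs \<longrightarrow> xs ! i \<notin> VH) \<and>
     (distinct xs \<or> (hd xs = last xs \<and> distinct (tl xs)))"

definition path_arcs :: "'a list \<Rightarrow> ('a \<times> 'a) set" where
  "path_arcs xs = {(xs ! i, xs ! (i + 1)) | i. i + 1 < length xs}"

definition path_length :: "'a list \<Rightarrow> nat" where
  "path_length xs = length xs - 1"

definition kernel :: "'a set \<Rightarrow> ('a \<times> 'a) set \<Rightarrow> 'a set \<Rightarrow> bool" where
  "kernel V A N \<longleftrightarrow> N \<subseteq> V \<and>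
     (\<forall>x\<in>N. \<forall>y\<in>N. (x, y) \<notin> A) \<and>
     (\<forall>x\<in>V - N. \<exists>y\<in>N. (x, y) \<in> A)"

definition has_kernel :: "'a set \<Rightarrow> ('a \<times> 'a) set \<Rightarrow> bool" where
  "has_kernel V A \<longleftrightarrow> (\<exists>N. kernel V A N)"

end

theory Submission
  imports Defs
begin

(* If the start x_0 of the ear were in N' or absorbed by N' inside H, then N' restricted
   to H would be a kernel of H, because the only arc of H' = H + P that leaves a vertex of H
   without being an arc of H is (x_0, x_1). Hence x_0 is not in N' and x_1 is. Every interior
   vertex of the ear has exactly one out-neighbour in H', its successor, so membership in N'
   alternates along the ear: x_i is in N' iff i is odd, for 1 <= i <= r. *)

lemma kernel_unique_successor:
  assumes "kernel V A N" "u \<in> V" "(u, w) \<in> A" "\<And>y. (u, y) \<in> A \<Longrightarrow> y = w"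
  shows "u \<in> N \<longleftrightarrow> w \<notin> N"
  using assms unfolding kernel_def by blast

lemma mem_path_arcs_iff:
  "(u, v) \<in> path_arcs xs \<longleftrightarrow> (\<exists>j. j + 1 < length xs \<and> u = xs ! j \<and> v = xs ! (j + 1))"
  unfolding path_arcs_def by auto

lemma ear_interior_notin:
  assumes "is_ear V A VH xs" "0 < i" "i + 1 < length xs"
  shows "xs ! i \<notin> VH"
  using assms unfolding is_ear_def by blast

lemma ear_nth_0_in:
  assumes "is_ear V A VH xs"
  shows "xs ! 0 \<in> VH"
  using assms unfolding is_ear_def by (cases xs) auto

lemma ear_path_arc_from_base:
  assumes "is_ear V A VH xs" "(v, y) \<in> path_arcs xs" "v \<in> VH"
  shows "v = hd xs \<and> y = xs ! 1"
proof -
  obtain j where j: "j + 1 < length xs" "v = xs ! j" "y = xs ! (j + 1)"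
    using assms(2) by (auto simp: mem_path_arcs_iff)
  have "j = 0"
    using ear_interior_notin[OF assms(1) _ j(1)] j(2) assms(3) by blast
  then show ?thesis
    using j by (cases xs) auto
qed

lemma ear_interior_successor:
  assumes ear: "is_ear V A VH xs" and "AH \<subseteq> VH \<times> VH"
    and i: "0 < i" "i + 1 < length xs" and arc: "(xs ! i, y) \<in> AH \<union> path_arcs xs"
  shows "y = xs ! (i + 1)"
proof -
  have notin: "xs ! i \<notin> VH"
    using ear_interior_notin[OF ear i] .
  then obtain j where j: "j + 1 < length xs" "xs ! i = xs ! j" "y = xs ! (j + 1)"
    using arc \<open>AH \<subseteq> VH \<times> VH\<close> by (auto simp: mem_path_arcs_iff)
  have "0 < j"
    using j(2) notin ear_nth_0_in[OF ear] by (metis gr0I)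
  have "distinct (tl xs)"
    using ear unfolding is_ear_def by (auto intro: distinct_tl)
  moreover have "tl xs ! (i - 1) = tl xs ! (j - 1)"
    using i j \<open>0 < j\<close> by (simp add: nth_tl)
  ultimately have "i = j"
    using i j \<open>0 < j\<close> by (simp add: nth_eq_iff_index_eq)
  then show ?thesis
    using j(3) by simp
qed

lemma kernel_Int_base_of_ear:
  assumes ear: "is_ear V A VH xs" and "AH \<subseteq> VH \<times> VH"
    and N: "kernel (VH \<union> set xs) (AH \<union> path_arcs xs) N"
    and base: "hd xs \<in> N \<or> (\<exists>y\<in>N. (hd xs, y) \<in> AH)"
  shows "kernel VH AH (N \<inter> VH)"
  unfolding kernel_def
proof (intro conjI ballI)
  show "N \<inter> VH \<subseteq> VH" by blast
  show "(x, y) \<notin> AH" if "x \<in> N \<inter> VH" "y \<in> N \<inter> VH" for x y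
    using that N unfolding kernel_def by blast
  show "\<exists>y\<in>N \<inter> VH. (v, y) \<in> AH" if v: "v \<in> VH - N \<inter> VH" for v
  proof -
    obtain y where y: "y \<in> N" "(v, y) \<in> AH \<union> path_arcs xs"
      using N v unfolding kernel_def by blast
    show ?thesis
    proof (cases "(v, y) \<in> AH")
      case True
      then show ?thesis using y \<open>AH \<subseteq> VH \<times> VH\<close> by blast
    next
      case False
      then have "v = hd xs"
        using ear_path_arc_from_base[OF ear] y v by blast
      then show ?thesis
        using base v \<open>AH \<subseteq> VH \<times> VH\<close> by blast
    qed
  qed
qed

lemma ear_kernel_start:
  assumes ear: "is_ear V A VH xs" and "AH \<subseteq> VH \<times> VH"
    and N: "kernel (VH \<union> set xs) (AH \<union> path_arcs xs) N"
    and "\<not> has_kernel VH AH"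
  shows "hd xs \<notin> N" and "xs ! 1 \<in> N"
proof -
  have not_base: "\<not> (hd xs \<in> N \<or> (\<exists>y\<in>N. (hd xs, y) \<in> AH))"
    using kernel_Int_base_of_ear[OF ear \<open>AH \<subseteq> VH \<times> VH\<close> N] assms(4)
    unfolding has_kernel_def by blast
  then show "hd xs \<notin> N" by blast
  have "hd xs \<in> VH"
    using ear unfolding is_ear_def by blast
  then obtain y where y: "y \<in> N" "(hd xs, y) \<in> AH \<union> path_arcs xs"
    using N \<open>hd xs \<notin> N\<close> unfolding kernel_def by blast
  then have "y = xs ! 1"
    using not_base ear_path_arc_from_base[OF ear _ \<open>hd xs \<in> VH\<close>] by blast
  then show "xs ! 1 \<in> N"
    using y by simp
qed

lemma ear_kernel_parity:
  assumes ear: "is_ear V A VH xs" and "AH \<subseteq> VH \<times> VH"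
    and N: "kernel (VH \<union> set xs) (AH \<union> path_arcs xs) N"
    and "\<not> has_kernel VH AH"
  shows "1 \<le> i \<Longrightarrow> i < length xs \<Longrightarrow> xs ! i \<in> N \<longleftrightarrow> odd i"
proof (induction i)
  case 0
  then show ?case by simp
next
  case (Suc k)
  show ?case
  proof (cases "k = 0")
    case True
    then show ?thesis
      using ear_kernel_start(2)[OF assms] by simp
  next
    case False
    have "xs ! k \<in> N \<longleftrightarrow> xs ! (k + 1) \<notin> N"
    proof (rule kernel_unique_successor[OF N])
      show "xs ! k \<in> VH \<union> set xs"
        using Suc.prems by simp
      show "(xs ! k, xs ! (k + 1)) \<in> AH \<union> path_arcs xs"
        using Suc.prems by (auto simp: mem_path_arcs_iff)
      show "y = xs ! (k + 1)" if "(xs ! k, y) \<in> AH \<union> path_arcs xs" for y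
        using ear_interior_successor[OF ear \<open>AH \<subseteq> VH \<times> VH\<close> _ _ that] False Suc.prems by simp
    qed
    then show ?thesis
      using Suc False by simp
  qed
qed

theorem mainTheorem5:
  fixes V :: "'a set" and A :: "('a \<times> 'a) set"
    and VH :: "'a set" and AH :: "('a \<times> 'a) set"
    and xs :: "'a list" and N' :: "'a set"
  assumes "digraph V A" and "strong V A" and "nonseparable V A"
    and "subdigraph VH AH V A" and "strong VH AH" and "nonseparable VH AH"
    and "is_ear V A VH xs" and "path_length xs \<ge> 2"
    and "\<not> has_kernel VH AH"
    and "kernel (VH \<union> set xs) (AH \<union> path_arcs xs) N'"
  shows "(hd xs \<notin> N' \<and> last xs \<in> N' \<and> odd (path_length xs)) \<or>
         (hd xs \<notin> N' \<and> last xs \<notin> N' \<and> even (path_length xs))"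
proof -
  have AH: "AH \<subseteq> VH \<times> VH"
    using assms(4) unfolding subdigraph_def digraph_def by blast
  note start = ear_kernel_start[OF assms(7) AH assms(10,9)]
  note parity = ear_kernel_parity[OF assms(7) AH assms(10,9)]
  have r: "1 \<le> path_length xs" "path_length xs < length xs"
    using assms(8) by (auto simp: path_length_def)
  then have last: "last xs = xs ! path_length xs"
    by (cases xs rule: rev_cases) (auto simp: path_length_def nth_append)
  show ?thesis
    using start(1) parity[OF r] last by auto
qed

end
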